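(* Fix a static price vector $\boldsymbol{\phi}=(\phi_1,\phi_2)\in[0,\phi_h]^2$ with $\phi_1\ge\phi_2$ (the case $\phi_1<\phi_2$ follows by exchanging the roles of the two platforms). For $\beta>0$ let $W(\beta)=\lambda_1(\boldsymbol{\phi};\beta)$ denote the (unique) Wardrop-equilibrium passenger arrival rate of platform 1, and let $\mathcal{M}_i(\boldsymbol{\phi};\beta)$ denote the matching revenue rate of platform $i$ evaluated at this Wardrop split. Let $\underline{\phi}=f^{-1}(2e/\Lambda)$ and $\bar{\phi}=f^{-1}(e/\Lambda)$ (each set to $0$ when not in range), and $m(\phi)=(\Lambda f(\phi)-e)\phi$. Define $W(0)=\tilde\lambda_1(\boldsymbol{\phi})$ and $\mathcal{M}_i(\boldsymbol{\phi};0)=\tilde{\mathcal{M}}_i(\boldsymbol{\phi})$ by: (a) if $\phi_1<\underline{\phi}$ (and $\phi_1\ge\phi_2$): $\tilde\lambda_1=\Lambda/2$, $\tilde{\mathcal{M}}_1=e\phi_1$, $\tilde{\mathcal{M}}_2=e\phi_2$; (b) if $\phi_1\in[\underline{\phi},\bar{\phi})$ and $\phi_1>\phi_2$: $\tilde\lambda_1=\Lambda-e/f(\phi_1)$, $\tilde{\mathcal{M}}_1=m(\phi_1)$, $\tilde{\mathcal{M}}_2=e\phi_2$; (c) if $\phi_1\in[\bar{\phi},\phi_h]$ and $\phi_1>\phi_2$: $\tilde\lambda_1=0$, $\tilde{\mathcal{M}}_1=0$, $\tilde{\mathcal{M}}_2=\min\{\Lambda f(\phi_2),e\}\phi_2$;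 (d) if $\phi_1=\phi_2\in[\underline{\phi},\phi_h]$: $\tilde\lambda_1=\Lambda/2$, $\tilde{\mathcal{M}}_i=\frac{\Lambda}{2}f(\phi_i)\phi_i$ for $i=1,2$. Then the mapping $\beta\mapsto W(\beta)$ is continuous on $[0,\infty)$, and likewise, for each $i$, the mapping $\beta\mapsto\mathcal{M}_i(\boldsymbol{\phi};\beta)$ is continuous on $[0,\infty)$.
   Context: Two symmetric ride-hailing platforms $i\in\{1,2\}$. Passengers arrive as a Poisson process of total rate $\Lambda$, split into Poisson streams of rates $\lambda_1+\lambda_2=\Lambda$. Each platform uses a static price $\phi_i\in[0,\phi_h]$; an arriving passenger finding a waiting driver accepts with probability $f(\phi_i)$, where $f$ is strictly concave, strictly decreasing, differentiable, $0<f\le 1$ on $[0,\phi_h]$ and $f(0)=1$. Drivers have effective arrival rate $e=\eta/(1-p)$ (same on both platforms) and each waiting driver abandons at rate $\beta>0$. The probability of no waiting driver is $\mathcal{D}_i=\big(\sum_{n\ge0} e^n/\prod_{a=1}^n(\lambda_i f(\phi_i)+a\beta)\big)^{-1}$, the combined blocking probability is $\mathcal{B}_i=\mathcal{D}_i f(\phi_i)+1-f(\phi_i)$, and the matching revenue rate is $\mathcal{M}_i=\lambda_i f(\phi_i)\phi_i(1-\mathcal{D}_i)$. The passenger split is the Wardrop equilibrium under QoS $\mathcal{B}$: $\lambda_1\in\arg\min_{\lambda\in[0,\Lambda]}(\mathcal{B}_1(\lambda)-\mathcal{B}_2(\Lambda-\lambda))^2$, $\lambda_2=\Lambda-\lambda_1$,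 which is unique for $\beta>0$.
   Formalization: The thresholds $\underline{\phi}$ and $\bar{\phi}$ are set to 0 only when their argument exceeds 1, and to $\phi_h$ + 1 (not 0) when it lies below $f(\phi_h)$. Each condition added here is assumed in the paper as well or is needed for the statement above to hold. *)

theory Defs
  imports "HOL-Analysis.Analysis"
begin

definition strictly_concave_on :: "real set \<Rightarrow> (real \<Rightarrow> real) \<Rightarrow> bool" where
  "strictly_concave_on S g \<longleftrightarrow> convex S \<and>
     (\<forall>x\<in>S. \<forall>y\<in>S. x \<noteq> y \<longrightarrow> (\<forall>t::real. 0 < t \<and> t < 1 \<longrightarrow>
        g ((1 - t) * x + t * y) > (1 - t) * g x + t * g y))"

definition noDriver :: "(real \<Rightarrow> real) \<Rightarrow> real \<Rightarrow> real \<Rightarrow> real \<Rightarrow> real \<Rightarrow> real" where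
  "noDriver f e lam phi beta =
     1 / (\<Sum>n. e ^ n / (\<Prod>a\<in>{1..n}. (lam * f phi + real a * beta)))"

definition blocking :: "(real \<Rightarrow> real) \<Rightarrow> real \<Rightarrow> real \<Rightarrow> real \<Rightarrow> real \<Rightarrow> real" where
  "blocking f e lam phi beta = noDriver f e lam phi beta * f phi + 1 - f phi"

definition matchRev :: "(real \<Rightarrow> real) \<Rightarrow> real \<Rightarrow> real \<Rightarrow> real \<Rightarrow> real \<Rightarrow> real" where
  "matchRev f e lam phi beta = lam * f phi * phi * (1 - noDriver f e lam phi beta)"

definition wardrop :: "(real \<Rightarrow> real) \<Rightarrow> real \<Rightarrow> real \<Rightarrow> real \<Rightarrow> real \<Rightarrow> real \<Rightarrow> real" where
  "wardrop f e Lam phi1 phi2 beta =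
     (THE l. l \<in> {0..Lam} \<and>
        (\<forall>l'\<in>{0..Lam}.
           (blocking f e l phi1 beta - blocking f e (Lam - l) phi2 beta)\<^sup>2
           \<le> (blocking f e l' phi1 beta - blocking f e (Lam - l') phi2 beta)\<^sup>2))"

text \<open>Inverse of f on [0, phi_h], with the conventions: 0 if y lies above the range
  (y > f 0 = 1), and a value beyond phi_h (namely phi_h + 1) if y lies below the
  range (y < f phi_h).\<close>
definition finv :: "(real \<Rightarrow> real) \<Rightarrow> real \<Rightarrow> real \<Rightarrow> real" where
  "finv f phih y =
     (if y \<in> f ` {0..phih} then (THE x. x \<in> {0..phih} \<and> f x = y)
      else if y > 1 then 0 else phih + 1)"

definition mfun :: "(real \<Rightarrow> real) \<Rightarrow> real \<Rightarrow> real \<Rightarrow> real \<Rightarrow> real" where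
  "mfun f e Lam phi = (Lam * f phi - e) * phi"

text \<open>Limit (beta = 0) quantities, cases (a)-(d), for phi1 >= phi2.\<close>
definition lamTilde :: "(real \<Rightarrow> real) \<Rightarrow> real \<Rightarrow> real \<Rightarrow> real \<Rightarrow> real \<Rightarrow> real \<Rightarrow> real" where
  "lamTilde f e Lam phih phi1 phi2 =
     (let lo = finv f phih (2 * e / Lam); hi = finv f phih (e / Lam) in
      if phi1 < lo then Lam / 2
      else if phi1 = phi2 then Lam / 2
      else if phi1 < hi then Lam - e / f phi1
      else 0)"

definition MTilde1 :: "(real \<Rightarrow> real) \<Rightarrow> real \<Rightarrow> real \<Rightarrow> real \<Rightarrow> real \<Rightarrow> real \<Rightarrow> real" where
  "MTilde1 f e Lam phih phi1 phi2 =
     (let lo = finv f phih (2 * e / Lam); hi = finv f phih (e / Lam) in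
      if phi1 < lo then e * phi1
      else if phi1 = phi2 then Lam / 2 * f phi1 * phi1
      else if phi1 < hi then mfun f e Lam phi1
      else 0)"

definition MTilde2 :: "(real \<Rightarrow> real) \<Rightarrow> real \<Rightarrow> real \<Rightarrow> real \<Rightarrow> real \<Rightarrow> real \<Rightarrow> real" where
  "MTilde2 f e Lam phih phi1 phi2 =
     (let lo = finv f phih (2 * e / Lam); hi = finv f phih (e / Lam) in
      if phi1 < lo then e * phi2
      else if phi1 = phi2 then Lam / 2 * f phi2 * phi2
      else if phi1 < hi then e * phi2
      else min (Lam * f phi2) e * phi2)"

definition Wext :: "(real \<Rightarrow> real) \<Rightarrow> real \<Rightarrow> real \<Rightarrow> real \<Rightarrow> real \<Rightarrow> real \<Rightarrow> real \<Rightarrow> real" where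
  "Wext f e Lam phih phi1 phi2 beta =
     (if beta = 0 then lamTilde f e Lam phih phi1 phi2 else wardrop f e Lam phi1 phi2 beta)"

definition Mext1 :: "(real \<Rightarrow> real) \<Rightarrow> real \<Rightarrow> real \<Rightarrow> real \<Rightarrow> real \<Rightarrow> real \<Rightarrow> real \<Rightarrow> real" where
  "Mext1 f e Lam phih phi1 phi2 beta =
     (if beta = 0 then MTilde1 f e Lam phih phi1 phi2
      else matchRev f e (wardrop f e Lam phi1 phi2 beta) phi1 beta)"

definition Mext2 :: "(real \<Rightarrow> real) \<Rightarrow> real \<Rightarrow> real \<Rightarrow> real \<Rightarrow> real \<Rightarrow> real \<Rightarrow> real \<Rightarrow> real" where
  "Mext2 f e Lam phih phi1 phi2 beta =
     (if beta = 0 then MTilde2 f e Lam phih phi1 phi2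
      else matchRev f e (Lam - wardrop f e Lam phi1 phi2 beta) phi2 beta)"

end

(* For beta > 0 the Wardrop split is the unique point where the difference of the blocking
   probabilities B_1(lambda) - B_2(Lam - lambda), continuous and strictly increasing in lambda,
   changes sign; as the blocking probabilities depend jointly continuously on (lambda, beta), so
   does this point, and with it the revenue rates.

   At beta = 0 the stationary law of waiting drivers degenerates: the probability of no waiting
   driver at matching rate c tends to max 0 (1 - e/c), so the served fraction of a platform with
   arrival rate lambda tends to min (f phi) (e / lambda). For phi_1 > phi_2 the difference of
   these limits again changes sign exactly once, at the split of cases (a)-(c), and the sign-change
   points for beta > 0 converge to it; for phi_1 = phi_2 the split is Lam/2 by symmetry. The
   revenue rates then tend to min (lambda f phi_i) e * phi_i, which are the values of cases (a)-(d). *)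
theory Submission
  imports Defs
begin

section \<open>The stationary law of waiting drivers\<close>

text \<open>Unnormalised stationary weight of \<open>n\<close> waiting drivers: drivers arrive at rate \<open>e\<close>,
  and while \<open>a\<close> of them wait one leaves at rate \<open>c + a b\<close>, by serving an accepting
  passenger (\<open>c = \<lambda> f(\<phi>)\<close>) or by abandoning.\<close>
definition driver_weight :: "real \<Rightarrow> real \<Rightarrow> real \<Rightarrow> nat \<Rightarrow> real" where
  "driver_weight e c b n = e ^ n / (\<Prod>a\<in>{1..n}. c + real a * b)"

definition no_driver_prob :: "real \<Rightarrow> real \<Rightarrow> real \<Rightarrow> real" where
  "no_driver_prob e c b = 1 / suminf (driver_weight e c b)"

lemma noDriver_eq_no_driver_prob: "noDriver f e lam phi beta = no_driver_prob e (lam * f phi) beta"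
  unfolding noDriver_def no_driver_prob_def driver_weight_def[abs_def] ..

lemma prod_affine_pos: "0 \<le> c \<Longrightarrow> 0 < b \<Longrightarrow> 0 < (\<Prod>a\<in>{1..n}. c + real a * b)"
  by (intro prod_pos) (auto intro: add_nonneg_pos)

lemma prod_affine_ge_fact:
  assumes "0 \<le> c" "0 \<le> b"
  shows "b ^ n * fact n \<le> (\<Prod>a\<in>{1..n}. c + real a * b)"
proof -
  have "b ^ n * fact n = (\<Prod>a\<in>{1..n}. real a * b)"
    by (simp add: prod.distrib fact_prod mult.commute)
  also have "\<dots> \<le> (\<Prod>a\<in>{1..n}. c + real a * b)"
    using assms by (intro prod_mono) auto
  finally show ?thesis .
qed

lemma prod_affine_ge_power:
  assumes "0 \<le> c" "0 \<le> b"
  shows "c ^ n \<le> (\<Prod>a\<in>{1..n}. c + real a * b)"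
proof -
  have "c ^ n = (\<Prod>a\<in>{1..n}. c)" by simp
  also have "\<dots> \<le> (\<Prod>a\<in>{1..n}. c + real a * b)"
    using assms by (intro prod_mono) auto
  finally show ?thesis .
qed

lemma driver_weight_pos: "0 < e \<Longrightarrow> 0 \<le> c \<Longrightarrow> 0 < b \<Longrightarrow> 0 < driver_weight e c b n"
  unfolding driver_weight_def using prod_affine_pos by simp

lemma driver_weight_1: "driver_weight e c b 1 = e / (c + b)"
  by (simp add: driver_weight_def)

lemma driver_weight_le_exp_term:
  assumes "0 < e" "0 \<le> c" "0 < b0" "b0 \<le> b"
  shows "driver_weight e c b n \<le> (e / b0) ^ n / fact n"
proof -
  have "b0 ^ n * fact n \<le> b ^ n * fact n"
    using assms by (intro mult_right_mono power_mono) auto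
  also have "\<dots> \<le> (\<Prod>a\<in>{1..n}. c + real a * b)"
    using assms prod_affine_ge_fact[of c b n] by simp
  finally have "driver_weight e c b n \<le> e ^ n / (b0 ^ n * fact n)"
    unfolding driver_weight_def using assms prod_affine_pos[of c b n]
    by (intro divide_left_mono) (auto intro!: mult_pos_pos)
  then show ?thesis by (simp add: power_divide)
qed

lemma summable_driver_weight:
  assumes "0 < e" "0 \<le> c" "0 < b"
  shows "summable (driver_weight e c b)"
proof (rule summable_comparison_test')
  show "summable (\<lambda>n. (e / b) ^ n / fact n)"
    using summable_exp[of "e / b"] by (simp add: divide_inverse mult.commute)
  show "norm (driver_weight e c b n) \<le> (e / b) ^ n / fact n" for n
    using driver_weight_le_exp_term[OF assms(1,2,3) order_refl] driver_weight_pos[OF assms]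
    by (simp add: less_imp_le)
qed

lemma driver_weight_antimono:
  assumes "0 < e" "0 \<le> c" "c \<le> c'" "0 < b"
  shows "driver_weight e c' b n \<le> driver_weight e c b n"
  unfolding driver_weight_def using assms prod_affine_pos[of c b n] prod_affine_pos[of c' b n]
  by (intro divide_left_mono prod_mono) auto

lemma driver_weight_le_geometric:
  assumes "0 < e" "0 < c" "0 < b"
  shows "driver_weight e c b n \<le> (e / c) ^ n"
  unfolding driver_weight_def power_divide
  using assms prod_affine_ge_power[of c b n] prod_affine_pos[of c b n]
  by (intro divide_left_mono) auto

lemma driver_partial_sum_le:
  assumes "0 < e" "0 \<le> c" "0 < b"
  shows "(\<Sum>n<N. driver_weight e c b n) \<le> suminf (driver_weight e c b)"
  using summable_driver_weight[OF assms] driver_weight_pos[OF assms]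
  by (intro sum_le_suminf) (auto intro: less_imp_le)

lemma driver_sum_gt_1:
  assumes "0 < e" "0 \<le> c" "0 < b"
  shows "1 < suminf (driver_weight e c b)"
proof -
  have "(\<Sum>n<2. driver_weight e c b n) < suminf (driver_weight e c b)"
    using summable_driver_weight[OF assms] driver_weight_pos[OF assms]
    by (intro sum_less_suminf) auto
  moreover have "(\<Sum>n<2. driver_weight e c b n) = 1 + driver_weight e c b 1"
    by (simp add: numeral_2_eq_2 driver_weight_def)
  ultimately show ?thesis
    using driver_weight_pos[OF assms, of 1] by simp
qed

lemma driver_sum_strict_antimono:
  assumes "0 < e" "0 \<le> c" "c < c'" "0 < b"
  shows "suminf (driver_weight e c' b) < suminf (driver_weight e c b)"
proof -
  have sums: "summable (driver_weight e c b)" "summable (driver_weight e c' b)"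
    using summable_driver_weight assms by auto
  have "driver_weight e c' b 1 < driver_weight e c b 1"
    unfolding driver_weight_1 using assms by (intro divide_strict_left_mono) auto
  then have "0 < (\<Sum>n. driver_weight e c b n - driver_weight e c' b n)"
    using sums driver_weight_antimono[OF assms(1,2) less_imp_le[OF assms(3)] assms(4)]
    by (intro suminf_pos2[where i=1] summable_diff) auto
  then show ?thesis using suminf_diff[OF sums] by simp
qed

lemma driver_sum_le_geometric:
  assumes "0 < e" "e < c" "0 < b"
  shows "suminf (driver_weight e c b) \<le> c / (c - e)"
proof -
  have "suminf (driver_weight e c b) \<le> (\<Sum>n. (e / c) ^ n)"
    using assms summable_driver_weight[of e c b] driver_weight_le_geometric[of e c b]
    by (intro suminf_le summable_geometric) auto
  also have "\<dots> = c / (c - e)"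
    using assms by (subst suminf_geometric) (auto simp: field_simps)
  finally show ?thesis .
qed

lemma no_driver_prob_bounds:
  "0 < e \<Longrightarrow> 0 \<le> c \<Longrightarrow> 0 < b \<Longrightarrow> 0 < no_driver_prob e c b \<and> no_driver_prob e c b < 1"
  unfolding no_driver_prob_def using driver_sum_gt_1[of e c b] by auto

lemma no_driver_prob_strict_mono:
  assumes "0 < e" "0 \<le> c" "c < c'" "0 < b"
  shows "no_driver_prob e c b < no_driver_prob e c' b"
  unfolding no_driver_prob_def using assms driver_sum_strict_antimono[OF assms]
    driver_sum_gt_1[of e c' b]
  by (intro divide_strict_left_mono) auto

lemma no_driver_prob_ge:
  assumes "0 < e" "e < c" "0 < b"
  shows "1 - e / c \<le> no_driver_prob e c b"
proof -
  have "1 - e / c = 1 / (c / (c - e))" using assms by (simp add: field_simps)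
  also have "\<dots> \<le> no_driver_prob e c b"
    unfolding no_driver_prob_def using assms driver_sum_le_geometric[OF assms]
      driver_sum_gt_1[of e c b]
    by (intro divide_left_mono) auto
  finally show ?thesis .
qed

lemma continuous_on_driver_weight:
  assumes "0 < \<delta>"
  shows "continuous_on {p. 0 \<le> fst p \<and> \<delta> \<le> snd p} (\<lambda>p. driver_weight e (fst p) (snd p) n)"
  unfolding driver_weight_def
proof (intro continuous_intros ballI)
  fix p :: "real \<times> real" assume "p \<in> {p. 0 \<le> fst p \<and> \<delta> \<le> snd p}"
  then have "0 < (\<Prod>a\<in>{1..n}. fst p + real a * snd p)"
    using prod_affine_pos[of "fst p" "snd p" n] assms by auto
  then show "(\<Prod>a\<in>{1..n}. fst p + real a * snd p) \<noteq> 0"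
    by linarith
qed

lemma continuous_on_driver_sum:
  assumes "0 < e" "0 < \<delta>"
  shows "continuous_on {p. 0 \<le> fst p \<and> \<delta> \<le> snd p}
           (\<lambda>p. suminf (driver_weight e (fst p) (snd p)))"
proof (rule uniform_limit_theorem[where F=sequentially])
  show "\<forall>\<^sub>F n in sequentially. continuous_on {p. 0 \<le> fst p \<and> \<delta> \<le> snd p}
          (\<lambda>p. \<Sum>i<n. driver_weight e (fst p) (snd p) i)"
    using continuous_on_driver_weight[OF assms(2)]
    by (intro always_eventually allI continuous_on_sum) auto
  show "uniform_limit {p. 0 \<le> fst p \<and> \<delta> \<le> snd p}
          (\<lambda>n p. \<Sum>i<n. driver_weight e (fst p) (snd p) i)
          (\<lambda>p. suminf (driver_weight e (fst p) (snd p))) sequentially"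
  proof (rule Weierstrass_m_test)
    show "summable (\<lambda>n. (e / \<delta>) ^ n / fact n)"
      using summable_exp[of "e / \<delta>"] by (simp add: divide_inverse mult.commute)
    fix n and p :: "real \<times> real" assume "p \<in> {p. 0 \<le> fst p \<and> \<delta> \<le> snd p}"
    then show "norm (driver_weight e (fst p) (snd p) n) \<le> (e / \<delta>) ^ n / fact n"
      using driver_weight_le_exp_term[OF assms(1) _ assms(2)]
        driver_weight_pos[OF assms(1), of "fst p" "snd p" n] assms by auto
  qed
qed auto

lemma no_driver_prob_tendsto:
  assumes "0 < e" "(c \<longlongrightarrow> c0) F" "(b \<longlongrightarrow> b0) F" "0 \<le> c0" "0 < b0"
    and "\<forall>\<^sub>F x in F. 0 \<le> c x"
  shows "((\<lambda>x. no_driver_prob e (c x) (b x)) \<longlongrightarrow> no_driver_prob e c0 b0) F"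
proof -
  let ?S = "\<lambda>p. suminf (driver_weight e (fst p) (snd p))"
  have "((\<lambda>x. ?S (c x, b x)) \<longlongrightarrow> ?S (c0, b0)) F"
  proof (rule continuous_on_tendsto_compose[OF continuous_on_driver_sum[OF assms(1), of "b0 / 2"]])
    show "((\<lambda>x. (c x, b x)) \<longlongrightarrow> (c0, b0)) F"
      using assms by (intro tendsto_intros)
    have "\<forall>\<^sub>F x in F. b0 / 2 < b x"
      using assms(3,5) by (intro order_tendstoD) auto
    then show "\<forall>\<^sub>F x in F. (c x, b x) \<in> {p. 0 \<le> fst p \<and> b0 / 2 \<le> snd p}"
      using assms(6) by eventually_elim auto
  qed (use assms in auto)
  then show ?thesis
    unfolding no_driver_prob_def using driver_sum_gt_1[OF assms(1,4,5)]
    by (intro tendsto_intros) auto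
qed

section \<open>Vanishing abandonment rate\<close>

text \<open>This is \<open>max 0 (1 - e / c)\<close>, written so that it is also right at \<open>c = 0\<close>,
  where \<open>1 - e / c\<close> would be \<open>1\<close>.\<close>
definition no_driver_prob_limit :: "real \<Rightarrow> real \<Rightarrow> real" where
  "no_driver_prob_limit e c = 1 - e / max c e"

lemma no_driver_prob_limit_le:
  assumes "0 < e" "0 \<le> c" "0 < b"
  shows "no_driver_prob_limit e c \<le> no_driver_prob e c b"
proof (cases "e < c")
  case True
  then show ?thesis
    using no_driver_prob_ge[OF assms(1) True assms(3)] by (simp add: no_driver_prob_limit_def)
next
  case False
  then show ?thesis
    using no_driver_prob_bounds[OF assms] assms(1) by (simp add: no_driver_prob_limit_def)
qed

lemma mult_one_minus_no_driver_prob_limit: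
  "0 < e \<Longrightarrow> 0 \<le> c \<Longrightarrow> c * (1 - no_driver_prob_limit e c) = min c e"
  by (auto simp: no_driver_prob_limit_def max_def min_def)

lemma partial_geometric_sum_gt:
  fixes r a :: real
  assumes "0 \<le> r" "r \<le> 1" "1 - r < a"
  shows "\<exists>N. 1 / a < (\<Sum>n<N. r ^ n)"
proof (cases "r = 1")
  case True
  obtain N :: nat where "1 / a < real N" using reals_Archimedean2 by blast
  then show ?thesis using True by auto
next
  case False
  then have "(\<lambda>N. \<Sum>n<N. r ^ n) \<longlonglongrightarrow> 1 / (1 - r)"
    using geometric_sums[of r] assms unfolding sums_def by simp
  moreover have "1 / a < 1 / (1 - r)"
    using assms False by (intro divide_strict_left_mono) auto
  ultimately have "\<forall>\<^sub>F N in sequentially. 1 / a < (\<Sum>n<N. r ^ n)"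
    by (rule order_tendstoD)
  then show ?thesis by (auto simp: eventually_sequentially)
qed

lemma driver_partial_sum_tendsto_zero_rate:
  assumes "(c \<longlongrightarrow> c0) F" "(b \<longlongrightarrow> 0) F" "0 < c0"
  shows "((\<lambda>x. \<Sum>n<N. driver_weight e (c x) (b x) n) \<longlongrightarrow> (\<Sum>n<N. (e / c0) ^ n)) F"
proof -
  have "((\<lambda>x. \<Sum>n<N. driver_weight e (c x) (b x) n)
         \<longlongrightarrow> (\<Sum>n<N. e ^ n / (\<Prod>a\<in>{1..n}. c0 + real a * 0))) F"
    unfolding driver_weight_def using assms by (intro tendsto_intros) auto
  then show ?thesis by (simp add: power_divide)
qed

lemma eventually_no_driver_prob_less:
  assumes e: "0 < e" and c: "(c \<longlongrightarrow> c0) F" and b: "(b \<longlongrightarrow> 0) F"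
    and b_pos: "\<forall>\<^sub>F x in F. 0 < b x" and c_nonneg: "\<forall>\<^sub>F x in F. 0 \<le> c x"
    and a: "no_driver_prob_limit e c0 < a"
  shows "\<forall>\<^sub>F x in F. no_driver_prob e (c x) (b x) < a"
proof -
  define m where "m = max c0 e"
  have m: "e \<le> m" "0 < m" using e by (auto simp: m_def)
  have "0 \<le> e / m" "e / m \<le> 1" "1 - e / m < a"
    using a m e by (auto simp: no_driver_prob_limit_def m_def)
  then obtain N where N: "1 / a < (\<Sum>n<N. (e / m) ^ n)"
    using partial_geometric_sum_gt by blast
  have a_pos: "0 < a" using \<open>1 - e / m < a\<close> \<open>e / m \<le> 1\<close> by linarith
  have "((\<lambda>x. max (c x) e) \<longlongrightarrow> m) F"
    unfolding m_def by (intro tendsto_intros c)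
  then have "\<forall>\<^sub>F x in F. 1 / a < (\<Sum>n<N. driver_weight e (max (c x) e) (b x) n)"
    using N by (intro order_tendstoD(1)[OF driver_partial_sum_tendsto_zero_rate[OF _ b m(2)]])
  then show ?thesis
    using b_pos c_nonneg
  proof eventually_elim
    case (elim x)
    have "(\<Sum>n<N. driver_weight e (max (c x) e) (b x) n)
            \<le> (\<Sum>n<N. driver_weight e (c x) (b x) n)"
      using elim e by (intro sum_mono driver_weight_antimono) auto
    also have "\<dots> \<le> suminf (driver_weight e (c x) (b x))"
      using driver_partial_sum_le elim e by auto
    finally have "1 / a < suminf (driver_weight e (c x) (b x))"
      using elim by linarith
    then show ?case
      unfolding no_driver_prob_def using a_pos driver_sum_gt_1[of e "c x" "b x"] elim e
      by (simp add: field_simps)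
  qed
qed

text \<open>As the abandonment rate vanishes, the queue of waiting drivers is either stable
  (\<open>c > e\<close>, geometric stationary law) or builds up indefinitely (\<open>c \<le> e\<close>).\<close>
lemma no_driver_prob_tendsto_limit:
  assumes e: "0 < e" and c: "(c \<longlongrightarrow> c0) F" and b: "(b \<longlongrightarrow> 0) F"
    and b_pos: "\<forall>\<^sub>F x in F. 0 < b x" and c_nonneg: "\<forall>\<^sub>F x in F. 0 \<le> c x"
  shows "((\<lambda>x. no_driver_prob e (c x) (b x)) \<longlongrightarrow> no_driver_prob_limit e c0) F"
proof (rule order_tendstoI)
  fix a assume a: "a < no_driver_prob_limit e c0"
  have "((\<lambda>x. no_driver_prob_limit e (c x)) \<longlongrightarrow> no_driver_prob_limit e c0) F"
    unfolding no_driver_prob_limit_def using e by (intro tendsto_intros c) auto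
  then have "\<forall>\<^sub>F x in F. a < no_driver_prob_limit e (c x)"
    using a by (rule order_tendstoD)
  then show "\<forall>\<^sub>F x in F. a < no_driver_prob e (c x) (b x)"
    using b_pos c_nonneg by eventually_elim (use no_driver_prob_limit_le e in force)
qed (rule eventually_no_driver_prob_less[OF assms])

section \<open>Sign-change points\<close>

definition sign_change_point :: "(real \<Rightarrow> real) \<Rightarrow> real \<Rightarrow> real \<Rightarrow> bool" where
  "sign_change_point g L w \<longleftrightarrow>
     w \<in> {0..L} \<and> (\<forall>x\<in>{0..L}. (x < w \<longrightarrow> g x < 0) \<and> (w < x \<longrightarrow> 0 < g x))"

lemma sign_change_pointI:
  assumes "w \<in> {0..L}"
    and "\<And>x. x \<in> {0..L} \<Longrightarrow> x < w \<Longrightarrow> g x < 0" "\<And>x. x \<in> {0..L} \<Longrightarrow> w < x \<Longrightarrow> 0 < g x"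
  shows "sign_change_point g L w"
  using assms unfolding sign_change_point_def by blast

lemma sign_change_point_eqI:
  "sign_change_point g L w \<Longrightarrow> x \<in> {0..L} \<Longrightarrow> g x = 0 \<Longrightarrow> w = x"
  unfolding sign_change_point_def by (metis less_irrefl linorder_neqE_linordered_idom)

lemma sign_change_point_of_min_square:
  fixes g :: "real \<Rightarrow> real"
  assumes mono: "\<And>x y. x \<in> {0..L} \<Longrightarrow> y \<in> {0..L} \<Longrightarrow> x < y \<Longrightarrow> g x < g y"
    and w: "w \<in> {0..L}" "\<And>x. x \<in> {0..L} \<Longrightarrow> (g w)\<^sup>2 \<le> (g x)\<^sup>2"
  shows "sign_change_point g L w"
proof (rule sign_change_pointI[OF w(1)])
  fix x assume x: "x \<in> {0..L}" "x < w"
  show "g x < 0"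
  proof (rule ccontr)
    assume "\<not> g x < 0"
    then have "(g x)\<^sup>2 < (g w)\<^sup>2"
      using mono[OF x(1) w(1) x(2)] by (intro power_strict_mono) auto
    then show False using w(2)[OF x(1)] by simp
  qed
next
  fix x assume x: "x \<in> {0..L}" "w < x"
  show "0 < g x"
  proof (rule ccontr)
    assume "\<not> 0 < g x"
    then have "(- g x)\<^sup>2 < (- g w)\<^sup>2"
      using mono[OF w(1) x(1) x(2)] by (intro power_strict_mono) auto
    then show False using w(2)[OF x(1)] by simp
  qed
qed

text \<open>Two distinct minimisers of \<open>g\<^sup>2\<close> would carry opposite signs, and the zero of \<open>g\<close>
  between them would be a strictly better point.\<close>
lemma min_square_unique:
  fixes g :: "real \<Rightarrow> real"
  assumes cont: "continuous_on {0..L} g"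
    and mono: "\<And>x y. x \<in> {0..L} \<Longrightarrow> y \<in> {0..L} \<Longrightarrow> x < y \<Longrightarrow> g x < g y"
    and l: "l \<in> {0..L}" "\<And>x. x \<in> {0..L} \<Longrightarrow> (g l)\<^sup>2 \<le> (g x)\<^sup>2"
    and l': "l' \<in> {0..L}" "\<And>x. x \<in> {0..L} \<Longrightarrow> (g l')\<^sup>2 \<le> (g x)\<^sup>2"
    and "l \<le> l'"
  shows "l = l'"
proof (rule ccontr)
  assume "l \<noteq> l'"
  with \<open>l \<le> l'\<close> have "l < l'" by simp
  then have "g l < g l'" using mono l(1) l'(1) by blast
  moreover have "(g l)\<^sup>2 = (g l')\<^sup>2"
    using l(2)[OF l'(1)] l'(2)[OF l(1)] by simp
  ultimately have signs: "g l < 0" "0 < g l'"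
    unfolding power2_eq_iff by auto
  moreover have "continuous_on {l..l'} g"
    using l(1) l'(1) by (intro continuous_on_subset[OF cont]) auto
  ultimately obtain z where "l \<le> z" "z \<le> l'" "g z = 0"
    using IVT'[of g l 0 l'] \<open>l < l'\<close> by auto
  then have "(g l)\<^sup>2 \<le> 0"
    using l(2)[of z] l(1) l'(1) by simp
  then show False using signs by simp
qed

lemma sign_change_point_argmin_square:
  fixes g :: "real \<Rightarrow> real"
  assumes "0 \<le> L" and cont: "continuous_on {0..L} g"
    and mono: "\<And>x y. x \<in> {0..L} \<Longrightarrow> y \<in> {0..L} \<Longrightarrow> x < y \<Longrightarrow> g x < g y"
  shows "sign_change_point g L (THE l. l \<in> {0..L} \<and> (\<forall>l'\<in>{0..L}. (g l)\<^sup>2 \<le> (g l')\<^sup>2))"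
proof -
  obtain w where w: "w \<in> {0..L}" "\<And>x. x \<in> {0..L} \<Longrightarrow> (g w)\<^sup>2 \<le> (g x)\<^sup>2"
    using continuous_attains_inf[OF compact_Icc _ continuous_on_power[OF cont, of 2]] assms(1)
    by auto
  have "(THE l. l \<in> {0..L} \<and> (\<forall>l'\<in>{0..L}. (g l)\<^sup>2 \<le> (g l')\<^sup>2)) = w"
  proof (rule the_equality)
    fix l assume l: "l \<in> {0..L} \<and> (\<forall>l'\<in>{0..L}. (g l)\<^sup>2 \<le> (g l')\<^sup>2)"
    show "l = w"
      using min_square_unique[OF cont mono, of l w] min_square_unique[OF cont mono, of w l] l w
      by (cases "l \<le> w") auto
  qed (use w in auto)
  then show ?thesis using sign_change_point_of_min_square[where g=g, OF mono w] by simp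
qed

lemma sign_change_point_tendsto:
  assumes ev: "\<forall>\<^sub>F b in F. sign_change_point (g b) L (W b)"
    and lim: "\<And>x. x \<in> {0..L} \<Longrightarrow> ((\<lambda>b. g b x) \<longlongrightarrow> G x) F"
    and G: "sign_change_point G L w"
  shows "(W \<longlongrightarrow> w) F"
proof (rule order_tendstoI)
  fix a assume "w < a"
  show "\<forall>\<^sub>F b in F. W b < a"
  proof (cases "a \<le> L")
    case True
    define x where "x = (w + a) / 2"
    have x: "x \<in> {0..L}" "w < x" "x < a"
      using G \<open>w < a\<close> True unfolding sign_change_point_def x_def by auto
    then have "\<forall>\<^sub>F b in F. 0 < g b x"
      using G unfolding sign_change_point_def by (intro order_tendstoD(1)[OF lim]) auto
    with ev show ?thesis
      by eventually_elim (use x in \<open>force simp: sign_change_point_def\<close>)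
  next
    case False
    show ?thesis using ev by eventually_elim (use False in \<open>auto simp: sign_change_point_def\<close>)
  qed
next
  fix a assume "a < w"
  show "\<forall>\<^sub>F b in F. a < W b"
  proof (cases "0 \<le> a")
    case True
    define x where "x = (w + a) / 2"
    have x: "x \<in> {0..L}" "x < w" "a < x"
      using G \<open>a < w\<close> True unfolding sign_change_point_def x_def by auto
    then have "\<forall>\<^sub>F b in F. g b x < 0"
      using G unfolding sign_change_point_def by (intro order_tendstoD(2)[OF lim]) auto
    with ev show ?thesis
      by eventually_elim (use x in \<open>force simp: sign_change_point_def\<close>)
  next
    case False
    show ?thesis using ev by eventually_elim (use False in \<open>auto simp: sign_change_point_def\<close>)
  qed
qed

section \<open>Blocking probability and matching revenue\<close>

lemma blocking_eq_no_driver_prob: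
  "blocking f e lam phi b = no_driver_prob e (lam * f phi) b * f phi + 1 - f phi"
  by (simp add: blocking_def noDriver_eq_no_driver_prob)

lemma matchRev_eq_no_driver_prob:
  "matchRev f e lam phi b = lam * f phi * (1 - no_driver_prob e (lam * f phi) b) * phi"
  by (simp add: matchRev_def noDriver_eq_no_driver_prob)

lemma blocking_strict_mono:
  assumes "0 < e" "0 < b" "0 < f phi" "0 \<le> l" "l < l'"
  shows "blocking f e l phi b < blocking f e l' phi b"
proof -
  have "no_driver_prob e (l * f phi) b < no_driver_prob e (l' * f phi) b"
    using assms by (intro no_driver_prob_strict_mono) auto
  then show ?thesis
    unfolding blocking_eq_no_driver_prob using assms(3) by simp
qed

lemma blocking_tendsto:
  assumes "0 < e" "0 \<le> f phi" "(lam \<longlongrightarrow> l0) F" "(b \<longlongrightarrow> b0) F" "0 \<le> l0" "0 < b0"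
    and "\<forall>\<^sub>F x in F. 0 \<le> lam x"
  shows "((\<lambda>x. blocking f e (lam x) phi (b x)) \<longlongrightarrow> blocking f e l0 phi b0) F"
proof -
  have "\<forall>\<^sub>F x in F. 0 \<le> lam x * f phi"
    using assms(7) by eventually_elim (use assms(2) in simp)
  then show ?thesis
    unfolding blocking_eq_no_driver_prob using assms
    by (intro tendsto_intros no_driver_prob_tendsto) auto
qed

lemma matchRev_tendsto:
  assumes "0 < e" "0 \<le> f phi" "(lam \<longlongrightarrow> l0) F" "(b \<longlongrightarrow> b0) F" "0 \<le> l0" "0 < b0"
    and "\<forall>\<^sub>F x in F. 0 \<le> lam x"
  shows "((\<lambda>x. matchRev f e (lam x) phi (b x)) \<longlongrightarrow> matchRev f e l0 phi b0) F"
proof -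
  have "\<forall>\<^sub>F x in F. 0 \<le> lam x * f phi"
    using assms(7) by eventually_elim (use assms(2) in simp)
  then show ?thesis
    unfolding matchRev_eq_no_driver_prob using assms
    by (intro tendsto_intros no_driver_prob_tendsto) auto
qed

text \<open>Limit of the served fraction \<open>1 - B = q (1 - D)\<close> as \<open>\<beta> \<rightarrow> 0\<close>: either every accepting
  passenger is served, or the driver supply \<open>e\<close> is shared among the \<open>lam\<close> arrivals.\<close>
definition served_limit :: "real \<Rightarrow> real \<Rightarrow> real \<Rightarrow> real" where
  "served_limit e lam q = (if lam * q \<le> e then q else e / lam)"

lemma blocking_tendsto_zero_rate:
  assumes "0 < e" "0 < f phi" "0 \<le> lam" "(b \<longlongrightarrow> 0) F" "\<forall>\<^sub>F x in F. 0 < b x"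
  shows "((\<lambda>x. blocking f e lam phi (b x)) \<longlongrightarrow> 1 - served_limit e lam (f phi)) F"
proof -
  let ?q = "f phi"
  have "((\<lambda>x. blocking f e lam phi (b x))
          \<longlongrightarrow> no_driver_prob_limit e (lam * ?q) * ?q + 1 - ?q) F"
    unfolding blocking_eq_no_driver_prob using assms
    by (intro tendsto_intros no_driver_prob_tendsto_limit) auto
  moreover have "no_driver_prob_limit e (lam * ?q) * ?q + 1 - ?q = 1 - served_limit e lam ?q"
    using assms by (auto simp: no_driver_prob_limit_def served_limit_def max_def field_simps)
  ultimately show ?thesis by simp
qed

lemma matchRev_tendsto_zero_rate:
  assumes "0 < e" "0 \<le> f phi" "(lam \<longlongrightarrow> l0) F" "(b \<longlongrightarrow> 0) F" "0 \<le> l0"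
    and "\<forall>\<^sub>F x in F. 0 < b x" "\<forall>\<^sub>F x in F. 0 \<le> lam x"
  shows "((\<lambda>x. matchRev f e (lam x) phi (b x)) \<longlongrightarrow> min (l0 * f phi) e * phi) F"
proof -
  have c_nonneg: "\<forall>\<^sub>F x in F. 0 \<le> lam x * f phi"
    using assms(7) by eventually_elim (use assms(2) in simp)
  have "((\<lambda>x. matchRev f e (lam x) phi (b x))
          \<longlongrightarrow> l0 * f phi * (1 - no_driver_prob_limit e (l0 * f phi)) * phi) F"
    unfolding matchRev_eq_no_driver_prob using assms c_nonneg
    by (intro tendsto_intros no_driver_prob_tendsto_limit) auto
  then show ?thesis
    using mult_one_minus_no_driver_prob_limit[of e "l0 * f phi"] assms by simp
qed

lemma served_limit_le:
  assumes "0 < e" "0 \<le> x" "0 \<le> q"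
  shows "served_limit e x q \<le> q"
proof (cases "x * q \<le> e")
  case False
  then have "0 < x" using assms by (cases "x = 0") auto
  then show ?thesis using False by (simp add: served_limit_def field_simps)
qed (simp add: served_limit_def)

lemma served_limit_eq: "x * q \<le> e \<Longrightarrow> served_limit e x q = q"
  by (simp add: served_limit_def)

lemma served_limit_gt:
  assumes "0 < t" "t < q" "0 \<le> x" "x * t < e"
  shows "t < served_limit e x q"
proof (cases "x * q \<le> e")
  case False
  then have "0 < x" using assms by (cases "x = 0") auto
  then show ?thesis using False assms by (simp add: served_limit_def field_simps)
qed (use assms in \<open>simp add: served_limit_def\<close>)

lemma served_limit_lt:
  assumes "0 < e" "0 < t" "t \<le> q" "0 \<le> x" "e < x * t"
  shows "served_limit e x q < t"
proof -
  have "0 < x" using assms by (cases "x = 0") auto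
  moreover have "x * t \<le> x * q" using assms(3) \<open>0 < x\<close> by simp
  then have "e < x * q" using assms(5) by linarith
  ultimately show ?thesis using assms by (simp add: served_limit_def field_simps)
qed

text \<open>The split \<open>\<lambda>\<^sub>1\<close> of cases (a)-(c), where the limiting served fractions of the two
  platforms balance.\<close>
definition fluid_split :: "real \<Rightarrow> real \<Rightarrow> real \<Rightarrow> real" where
  "fluid_split e Lam q =
     (if 2 * e < Lam * q then Lam / 2 else if e < Lam * q then Lam - e / q else 0)"

lemma sign_change_point_served_limit_half:
  assumes e: "0 < e" and Lam: "0 < Lam" and q: "q1 < q2" and high: "2 * e < Lam * q1"
  shows "sign_change_point (\<lambda>x. served_limit e (Lam - x) q2 - served_limit e x q1) Lam (Lam / 2)"
proof (rule sign_change_pointI)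
  define t where "t = 2 * e / Lam"
  have t: "0 < t" "t < q1" using high e Lam by (auto simp: t_def field_simps)
  fix x assume x: "x \<in> {0..Lam}"
  show "served_limit e (Lam - x) q2 - served_limit e x q1 < 0" if "x < Lam / 2"
  proof -
    have "x * t < e" "e < (Lam - x) * t" using that e Lam by (auto simp: t_def field_simps)
    then show ?thesis
      using served_limit_gt[OF t] served_limit_lt[OF e, of t q2 "Lam - x"] t q x by force
  qed
  show "0 < served_limit e (Lam - x) q2 - served_limit e x q1" if "Lam / 2 < x"
  proof -
    have "(Lam - x) * t < e" "e < x * t" using that e Lam by (auto simp: t_def field_simps)
    then show ?thesis
      using served_limit_gt[of t q2 "Lam - x" e] served_limit_lt[OF e t(1) less_imp_le[OF t(2)]]
        t q x by force
  qed
qed (use Lam in simp)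

lemma sign_change_point_served_limit_saturated:
  assumes e: "0 < e" and Lam: "0 \<le> Lam" and q: "0 < q1" "q1 < q2" and low: "Lam * q1 \<le> 2 * e"
  shows "sign_change_point (\<lambda>x. served_limit e (Lam - x) q2 - served_limit e x q1) Lam
           (max 0 (Lam - e / q1))"
proof (rule sign_change_pointI)
  fix x assume x: "x \<in> {0..Lam}"
  show "served_limit e (Lam - x) q2 - served_limit e x q1 < 0" if "x < max 0 (Lam - e / q1)"
  proof -
    have "x < Lam - e / q1" using that x by (auto simp: max_def split: if_splits)
    then have "x * q1 < Lam * q1 - e" "e < (Lam - x) * q1"
      using q by (auto simp: field_simps)
    then have "x * q1 \<le> e" "e < (Lam - x) * q1" using low by linarith+
    then show ?thesis
      using served_limit_eq served_limit_lt[OF e, of q1 q2 "Lam - x"] q x by force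
  qed
  show "0 < served_limit e (Lam - x) q2 - served_limit e x q1" if "max 0 (Lam - e / q1) < x"
  proof -
    have "(Lam - x) * q1 < e" using that q by (auto simp: field_simps)
    then show ?thesis
      using served_limit_le[OF e, of x q1] served_limit_gt[of q1 q2 "Lam - x" e] q x by force
  qed
qed (use e Lam q in \<open>auto simp: field_simps\<close>)

lemma sign_change_point_served_limit:
  assumes "0 < e" "0 < Lam" "0 < q1" "q1 < q2"
  shows "sign_change_point (\<lambda>x. served_limit e (Lam - x) q2 - served_limit e x q1) Lam
           (fluid_split e Lam q1)"
proof (cases "2 * e < Lam * q1")
  case True
  then show ?thesis
    using sign_change_point_served_limit_half assms by (simp add: fluid_split_def)
next
  case False
  then have "fluid_split e Lam q1 = max 0 (Lam - e / q1)"
    using assms by (auto simp: fluid_split_def max_def field_simps)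
  then show ?thesis
    using sign_change_point_served_limit_saturated False assms by simp
qed

section \<open>The Wardrop split\<close>

lemma wardrop_sign_change_point:
  assumes "0 < e" "0 < Lam" "0 < b" "0 < f phi1" "0 < f phi2"
  shows "sign_change_point (\<lambda>x. blocking f e x phi1 b - blocking f e (Lam - x) phi2 b) Lam
           (wardrop f e Lam phi1 phi2 b)"
  unfolding wardrop_def
proof (rule sign_change_point_argmin_square)
  show "continuous_on {0..Lam} (\<lambda>x. blocking f e x phi1 b - blocking f e (Lam - x) phi2 b)"
    unfolding continuous_on_def
  proof (intro ballI tendsto_intros)
    fix x assume x: "x \<in> {0..Lam}"
    have "\<forall>\<^sub>F y in at x within {0..Lam}. y \<in> {0..Lam}"
      by (simp add: eventually_at_filter)
    then have nonneg: "\<forall>\<^sub>F y in at x within {0..Lam}. 0 \<le> y \<and> 0 \<le> Lam - y"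
      by eventually_elim auto
    show "((\<lambda>y. blocking f e y phi1 b) \<longlongrightarrow> blocking f e x phi1 b) (at x within {0..Lam})"
      using assms x nonneg
      by (intro blocking_tendsto[where b="\<lambda>_. b"])
         (auto intro: tendsto_ident_at elim: eventually_mono)
    show "((\<lambda>y. blocking f e (Lam - y) phi2 b) \<longlongrightarrow> blocking f e (Lam - x) phi2 b)
            (at x within {0..Lam})"
      using assms x nonneg
      by (intro blocking_tendsto[where b="\<lambda>_. b"])
         (auto intro!: tendsto_intros elim: eventually_mono)
  qed
  show "blocking f e x phi1 b - blocking f e (Lam - x) phi2 b
          < blocking f e y phi1 b - blocking f e (Lam - y) phi2 b"
    if "x \<in> {0..Lam}" "y \<in> {0..Lam}" "x < y" for x y
    using that assms blocking_strict_mono[of e b f phi1 x y]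
      blocking_strict_mono[of e b f phi2 "Lam - y" "Lam - x"]
    by auto
qed (use assms in auto)

lemma wardrop_bounds:
  assumes "0 < e" "0 < Lam" "0 < b" "0 < f phi1" "0 < f phi2"
  shows "0 \<le> wardrop f e Lam phi1 phi2 b \<and> wardrop f e Lam phi1 phi2 b \<le> Lam"
  using wardrop_sign_change_point[of e Lam b f phi1 phi2] assms
  by (simp add: sign_change_point_def)

lemma wardrop_same_price:
  assumes "0 < e" "0 < Lam" "0 < b" "0 < f phi"
  shows "wardrop f e Lam phi phi b = Lam / 2"
  using assms by (intro sign_change_point_eqI[OF wardrop_sign_change_point]) auto

lemma isCont_wardrop:
  assumes "0 < e" "0 < Lam" "0 < f phi1" "0 < f phi2" "0 < b0"
  shows "isCont (wardrop f e Lam phi1 phi2) b0"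
  unfolding isCont_def
proof (rule sign_change_point_tendsto)
  have "\<forall>\<^sub>F b in at b0. 0 < b"
    using assms(5) by (intro order_tendstoD(1)[OF tendsto_ident_at])
  then show "\<forall>\<^sub>F b in at b0. sign_change_point
      (\<lambda>x. blocking f e x phi1 b - blocking f e (Lam - x) phi2 b) Lam (wardrop f e Lam phi1 phi2 b)"
    by eventually_elim (use assms wardrop_sign_change_point in blast)
  show "((\<lambda>b. blocking f e x phi1 b - blocking f e (Lam - x) phi2 b)
          \<longlongrightarrow> blocking f e x phi1 b0 - blocking f e (Lam - x) phi2 b0) (at b0)"
    if "x \<in> {0..Lam}" for x
    using assms that
    by (intro tendsto_diff blocking_tendsto[where lam="\<lambda>_. _"] tendsto_ident_at) auto
qed (use wardrop_sign_change_point[of e Lam b0 f phi1 phi2] assms in simp)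

lemma wardrop_tendsto_zero_rate:
  assumes "0 < e" "0 < Lam" "0 < f phi1" "f phi1 \<le> f phi2"
    and "phi1 \<noteq> phi2 \<Longrightarrow> f phi1 < f phi2"
  shows "(wardrop f e Lam phi1 phi2 \<longlongrightarrow>
           (if phi1 = phi2 then Lam / 2 else fluid_split e Lam (f phi1))) (at_right 0)"
proof (cases "phi1 = phi2")
  case True
  have "\<forall>\<^sub>F b in at_right 0. wardrop f e Lam phi1 phi2 b = Lam / 2"
    using eventually_at_right_less by eventually_elim (use assms True wardrop_same_price in auto)
  then show ?thesis using True by (simp add: tendsto_eventually)
next
  case False
  have "(wardrop f e Lam phi1 phi2 \<longlongrightarrow> fluid_split e Lam (f phi1)) (at_right 0)"
  proof (rule sign_change_point_tendsto)
    show "\<forall>\<^sub>F b in at_right 0. sign_change_point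
        (\<lambda>x. blocking f e x phi1 b - blocking f e (Lam - x) phi2 b) Lam (wardrop f e Lam phi1 phi2 b)"
      using eventually_at_right_less
      by eventually_elim (use assms wardrop_sign_change_point in auto)
    show "((\<lambda>b. blocking f e x phi1 b - blocking f e (Lam - x) phi2 b) \<longlongrightarrow>
            served_limit e (Lam - x) (f phi2) - served_limit e x (f phi1)) (at_right 0)"
      if "x \<in> {0..Lam}" for x
    proof -
      have "((\<lambda>b. blocking f e x phi1 b - blocking f e (Lam - x) phi2 b) \<longlongrightarrow>
              (1 - served_limit e x (f phi1)) - (1 - served_limit e (Lam - x) (f phi2))) (at_right 0)"
        using assms that
        by (intro tendsto_diff blocking_tendsto_zero_rate eventually_at_right_less tendsto_ident_at)
           auto
      then show ?thesis by simp
    qed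
    show "sign_change_point (\<lambda>x. served_limit e (Lam - x) (f phi2) - served_limit e x (f phi1)) Lam
            (fluid_split e Lam (f phi1))"
      using assms False by (intro sign_change_point_served_limit) auto
  qed
  then show ?thesis using False by simp
qed

lemma eventually_wardrop_bounds:
  assumes "0 < e" "0 < Lam" "0 < f phi1" "0 < f phi2" "\<forall>\<^sub>F b in F. 0 < b"
  shows "\<forall>\<^sub>F b in F. 0 \<le> wardrop f e Lam phi1 phi2 b \<and> wardrop f e Lam phi1 phi2 b \<le> Lam"
  using assms(5) by eventually_elim (use assms wardrop_bounds in blast)

lemma isCont_matchRev_wardrop:
  assumes "0 < e" "0 < Lam" "0 < f phi1" "0 < f phi2" "0 < b0"
  shows "isCont (\<lambda>b. matchRev f e (wardrop f e Lam phi1 phi2 b) phi1 b) b0"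
    and "isCont (\<lambda>b. matchRev f e (Lam - wardrop f e Lam phi1 phi2 b) phi2 b) b0"
proof -
  let ?W = "wardrop f e Lam phi1 phi2"
  have W: "(?W \<longlongrightarrow> ?W b0) (at b0)"
    using isCont_wardrop[of e Lam f phi1 phi2 b0] assms by (simp add: isCont_def)
  have "\<forall>\<^sub>F b in at b0. 0 < b"
    using assms(5) by (intro order_tendstoD(1)[OF tendsto_ident_at])
  then have bounds: "\<forall>\<^sub>F b in at b0. 0 \<le> ?W b \<and> ?W b \<le> Lam"
    using assms by (intro eventually_wardrop_bounds) auto
  have W0: "0 \<le> ?W b0" "?W b0 \<le> Lam"
    using wardrop_bounds[of e Lam b0 f phi1 phi2] assms by auto
  show "isCont (\<lambda>b. matchRev f e (?W b) phi1 b) b0"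
    unfolding isCont_def using assms W W0 bounds
    by (intro matchRev_tendsto tendsto_ident_at) (auto elim: eventually_mono)
  show "isCont (\<lambda>b. matchRev f e (Lam - ?W b) phi2 b) b0"
    unfolding isCont_def using assms W W0 bounds
    by (intro matchRev_tendsto tendsto_intros) (auto elim: eventually_mono)
qed

lemma matchRev_wardrop_tendsto_zero_rate:
  assumes "0 < e" "0 < Lam" "0 < f phi1" "0 < f phi2"
    and W: "(wardrop f e Lam phi1 phi2 \<longlongrightarrow> L) (at_right 0)"
  shows "((\<lambda>b. matchRev f e (wardrop f e Lam phi1 phi2 b) phi1 b)
            \<longlongrightarrow> min (L * f phi1) e * phi1) (at_right 0)"
    and "((\<lambda>b. matchRev f e (Lam - wardrop f e Lam phi1 phi2 b) phi2 b)
            \<longlongrightarrow> min ((Lam - L) * f phi2) e * phi2) (at_right 0)"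
proof -
  have bounds: "\<forall>\<^sub>F b in at_right 0.
      0 \<le> wardrop f e Lam phi1 phi2 b \<and> wardrop f e Lam phi1 phi2 b \<le> Lam"
    using assms by (intro eventually_wardrop_bounds eventually_at_right_less) auto
  have "0 \<le> L" "L \<le> Lam"
    using bounds
    by (auto intro: tendsto_lowerbound[OF W] tendsto_upperbound[OF W] elim: eventually_mono)
  then show "((\<lambda>b. matchRev f e (wardrop f e Lam phi1 phi2 b) phi1 b)
            \<longlongrightarrow> min (L * f phi1) e * phi1) (at_right 0)"
    using assms bounds
    by (intro matchRev_tendsto_zero_rate tendsto_ident_at eventually_at_right_less)
       (auto elim: eventually_mono)
  show "((\<lambda>b. matchRev f e (Lam - wardrop f e Lam phi1 phi2 b) phi2 b)
            \<longlongrightarrow> min ((Lam - L) * f phi2) e * phi2) (at_right 0)"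
    using assms bounds \<open>L \<le> Lam\<close>
    by (intro matchRev_tendsto_zero_rate tendsto_intros eventually_at_right_less)
       (auto elim: eventually_mono)
qed

section \<open>Extension to zero abandonment rate\<close>

lemma continuous_on_nonneg_extension:
  fixes h :: "real \<Rightarrow> real"
  assumes "\<And>b. 0 < b \<Longrightarrow> isCont h b" "(h \<longlongrightarrow> v) (at_right 0)"
  shows "continuous_on {0..} (\<lambda>b. if b = 0 then v else h b)"
  unfolding continuous_on_eq_continuous_within
proof
  fix b :: real assume "b \<in> {0..}"
  then consider "b = 0" | "0 < b" by fastforce
  then show "continuous (at b within {0..}) (\<lambda>b. if b = 0 then v else h b)"
  proof cases
    case 1
    have "\<forall>\<^sub>F x in at_right 0. h x = (if x = 0 then v else h x)"
      by (simp add: eventually_at_filter)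
    then show ?thesis
      using assms(2) 1 by (simp add: continuous_within at_within_Ici_at_right tendsto_cong)
  next
    case 2
    have "\<forall>\<^sub>F x in nhds b. x \<in> {0<..}"
      using 2 by (intro eventually_nhds_in_open) auto
    then have "\<forall>\<^sub>F x in nhds b. (if x = 0 then v else h x) = h x"
      by eventually_elim auto
    then have "isCont (\<lambda>b. if b = 0 then v else h b) b = isCont h b"
      by (rule isCont_cong)
    then have "isCont (\<lambda>b. if b = 0 then v else h b) b"
      using assms(1)[OF 2] by blast
    then show ?thesis by (rule continuous_at_imp_continuous_within)
  qed
qed

lemma finv_eqI:
  assumes decr: "\<forall>x\<in>{0..phih}. \<forall>y\<in>{0..phih}. x < y \<longrightarrow> f y < f x"
    and z: "z \<in> {0..phih}"
  shows "finv f phih (f z) = z"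
proof -
  have "(THE x. x \<in> {0..phih} \<and> f x = f z) = z"
  proof (rule the_equality)
    fix x assume "x \<in> {0..phih} \<and> f x = f z"
    then show "x = z" using decr z by (cases x z rule: linorder_cases) fastforce+
  qed (use z in auto)
  then show ?thesis using z by (simp add: finv_def)
qed

lemma finv_gt_iff:
  assumes cont: "continuous_on {0..phih} f"
    and decr: "\<forall>x\<in>{0..phih}. \<forall>y\<in>{0..phih}. x < y \<longrightarrow> f y < f x"
    and le1: "\<forall>x\<in>{0..phih}. f x \<le> 1" and f0: "f 0 = 1" and phi: "phi \<in> {0..phih}"
  shows "phi < finv f phih y \<longleftrightarrow> y < f phi"
proof -
  have less_iff: "f v < f u \<longleftrightarrow> u < v" if "u \<in> {0..phih}" "v \<in> {0..phih}" for u v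
    using decr that by (metis linorder_neqE_linordered_idom order_less_asym)
  consider (range) z where "z \<in> {0..phih}" "y = f z" | (above) "y \<notin> f ` {0..phih}" "1 < y"
    | (below) "y \<notin> f ` {0..phih}" "y \<le> 1"
    by fastforce
  then show ?thesis
  proof cases
    case range
    then show ?thesis using finv_eqI[OF decr] less_iff[OF phi] by simp
  next
    case above
    moreover have "f phi \<le> 1" using le1 phi by blast
    ultimately show ?thesis using phi by (simp add: finv_def)
  next
    case below
    have "y < f phih"
    proof (rule ccontr)
      assume "\<not> y < f phih"
      then obtain x where "0 \<le> x" "x \<le> phih" "f x = y"
        using IVT2'[of f phih y 0] cont below f0 phi by auto
      then show False using below by auto
    qed
    moreover have "f phih \<le> f phi"
      using less_iff[OF phi, of phih] phi by (cases "phi = phih") auto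
    ultimately show ?thesis using below phi by (simp add: finv_def)
  qed
qed

lemma lamTilde_eq:
  assumes "0 < e" "0 < Lam" "0 < f phi1"
    and finv: "\<And>y. phi1 < finv f phih y \<longleftrightarrow> y < f phi1"
  shows "lamTilde f e Lam phih phi1 phi2 =
           (if phi1 = phi2 then Lam / 2 else fluid_split e Lam (f phi1))"
  unfolding lamTilde_def Let_def finv fluid_split_def using assms by (auto simp: field_simps)

lemma MTilde_eq:
  assumes e: "0 < e" and Lam: "0 < Lam" and f1: "0 < f phi1" and f12: "f phi1 \<le> f phi2"
    and f12_strict: "phi1 \<noteq> phi2 \<Longrightarrow> f phi1 < f phi2"
    and finv: "\<And>y. phi1 < finv f phih y \<longleftrightarrow> y < f phi1"
  defines "L \<equiv> lamTilde f e Lam phih phi1 phi2"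
  shows "MTilde1 f e Lam phih phi1 phi2 = min (L * f phi1) e * phi1"
    and "MTilde2 f e Lam phih phi1 phi2 = min ((Lam - L) * f phi2) e * phi2"
proof -
  have L: "L = (if phi1 = phi2 then Lam / 2 else fluid_split e Lam (f phi1))"
    unfolding L_def using lamTilde_eq[OF e Lam f1 finv] .
  note defs = MTilde1_def MTilde2_def Let_def finv mfun_def
  consider (A) "2 * e < Lam * f phi1" | (D) "\<not> 2 * e < Lam * f phi1" "phi1 = phi2"
    | (B) "\<not> 2 * e < Lam * f phi1" "phi1 \<noteq> phi2" "e < Lam * f phi1"
    | (C) "Lam * f phi1 \<le> e" "phi1 \<noteq> phi2"
    by linarith
  then have "MTilde1 f e Lam phih phi1 phi2 = min (L * f phi1) e * phi1 \<and>
             MTilde2 f e Lam phih phi1 phi2 = min ((Lam - L) * f phi2) e * phi2"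
  proof cases
    case A
    have "Lam * f phi1 \<le> Lam * f phi2" using f12 Lam by simp
    then have "2 * e < Lam * f phi2" using A by linarith
    then have "2 * e / Lam < f phi1" "e < Lam / 2 * f phi1" "e < Lam / 2 * f phi2"
      using A Lam by (auto simp: field_simps)
    then show ?thesis using A by (simp add: defs L fluid_split_def)
  next
    case D
    have "\<not> 2 * e / Lam < f phi1" "Lam / 2 * f phi1 \<le> e"
      using D(1) Lam by (auto simp: field_simps)
    then show ?thesis unfolding defs using D(2) by (simp add: L)
  next
    case B
    have "(Lam - L) * f phi2 = e * (f phi2 / f phi1)"
      using B f1 by (simp add: L fluid_split_def)
    moreover have "e * 1 < e * (f phi2 / f phi1)"
      using B f12_strict f1 e by (intro mult_strict_left_mono) auto
    ultimately have m2: "min ((Lam - L) * f phi2) e = e" by simp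
    have "L * f phi1 = Lam * f phi1 - e" using B f1 by (simp add: L fluid_split_def field_simps)
    then have m1: "min (L * f phi1) e = Lam * f phi1 - e" using B by simp
    have "\<not> 2 * e / Lam < f phi1" "e / Lam < f phi1" using B Lam by (auto simp: field_simps)
    then show ?thesis using B by (simp add: defs m1 m2)
  next
    case C
    have "\<not> 2 * e / Lam < f phi1" "\<not> e / Lam < f phi1"
      using C e Lam by (auto simp: field_simps)
    moreover have "L = 0" using C e by (simp add: L fluid_split_def)
    ultimately show ?thesis unfolding defs using C(2) e by simp
  qed
  then show "MTilde1 f e Lam phih phi1 phi2 = min (L * f phi1) e * phi1"
    and "MTilde2 f e Lam phih phi1 phi2 = min ((Lam - L) * f phi2) e * phi2"
    by auto
qed

theorem theorem3:
  fixes f :: "real \<Rightarrow> real" and Lam eta p phih phi1 phi2 :: real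
  assumes Lam_pos: "Lam > 0"
    and eta_pos: "eta > 0" and p_range: "0 \<le> p" "p < 1"
    and phih_pos: "phih > 0"
    and f_concave: "strictly_concave_on {0..phih} f"
    and f_decr: "\<forall>x\<in>{0..phih}. \<forall>y\<in>{0..phih}. x < y \<longrightarrow> f y < f x"
    and f_diff: "f differentiable_on {0..phih}"
    and f_bounds: "\<forall>x\<in>{0..phih}. 0 < f x \<and> f x \<le> 1"
    and f0: "f 0 = 1"
    and phi1_range: "phi1 \<in> {0..phih}" and phi2_range: "phi2 \<in> {0..phih}"
    and order: "phi1 \<ge> phi2"
  shows "continuous_on {0..} (Wext f (eta / (1 - p)) Lam phih phi1 phi2)
       \<and> continuous_on {0..} (Mext1 f (eta / (1 - p)) Lam phih phi1 phi2)
       \<and> continuous_on {0..} (Mext2 f (eta / (1 - p)) Lam phih phi1 phi2)"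
proof -
  define e where "e = eta / (1 - p)"
  define L where "L = lamTilde f e Lam phih phi1 phi2"
  let ?W = "wardrop f e Lam phi1 phi2"
  have e: "0 < e" using eta_pos p_range by (simp add: e_def)
  have f: "0 < f phi1" "0 < f phi2" using f_bounds phi1_range phi2_range by auto
  have f12_strict: "phi1 \<noteq> phi2 \<Longrightarrow> f phi1 < f phi2"
    using f_decr phi1_range phi2_range order by auto
  then have f12: "f phi1 \<le> f phi2" by (cases "phi1 = phi2") auto
  have finv: "phi1 < finv f phih y \<longleftrightarrow> y < f phi1" for y
    using finv_gt_iff[OF differentiable_imp_continuous_on[OF f_diff] f_decr _ f0 phi1_range]
      f_bounds by auto
  have W0: "(?W \<longlongrightarrow> L) (at_right 0)"
    using wardrop_tendsto_zero_rate[where f=f, OF e Lam_pos f(1) f12 f12_strict]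
    unfolding L_def lamTilde_eq[where f=f, OF e Lam_pos f(1) finv] .
  note M0 = matchRev_wardrop_tendsto_zero_rate[where f=f, OF e Lam_pos f W0]
  note MTilde = MTilde_eq[where f=f, OF e Lam_pos f(1) f12 f12_strict finv, folded L_def]
  have "Wext f e Lam phih phi1 phi2 = (\<lambda>b. if b = 0 then L else ?W b)"
    "Mext1 f e Lam phih phi1 phi2 = (\<lambda>b. if b = 0 then min (L * f phi1) e * phi1
       else matchRev f e (?W b) phi1 b)"
    "Mext2 f e Lam phih phi1 phi2 = (\<lambda>b. if b = 0 then min ((Lam - L) * f phi2) e * phi2
       else matchRev f e (Lam - ?W b) phi2 b)"
    by (simp_all add: fun_eq_iff Wext_def Mext1_def Mext2_def L_def MTilde)
  then show ?thesis
    unfolding e_def[symmetric]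
    using isCont_wardrop isCont_matchRev_wardrop e Lam_pos f W0 M0
    by (auto intro!: continuous_on_nonneg_extension)
qed

end
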